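(* Let $N\ge 1$ and let $D\in\mathcal{M}_{2N,2N}(\mathbb{R})$ be a symmetric, negative semidefinite matrix with $\operatorname{Ker} D=\operatorname{Span}(\mathbf{1})$, where $\mathbf{1}=(1,\dots,1)^T\in\mathbb{R}^{2N}$. Assume moreover that $D_{i,j}\ge 0$ for all $i\neq j$, and that there exists a sequence $k_0,\dots,k_n$ of integers in $\{1,\dots,2N\}$ containing every integer of $\{1,\dots,2N\}$, with $k_m\neq k_{m+1}$ and $D_{k_m,k_{m+1}}>0$ for all $m$. Let $F\in\mathbb{R}^{2N}$ have strictly positive components, and let $\ln(F)$ denote the vector $(\ln F_1,\dots,\ln F_{2N})^T$. Then the following are equivalent: (1) $DF=0$; (2) $F=\rho\mathbf{1}$ with $\rho=\frac{1}{2N}\sum_{j=1}^{2N}F_j$; (3) $\langle DF,\ln(F)\rangle=0$, where $\langle U,W\rangle=\sum_{k=1}^{2N}U_kW_k$.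
   Context: The matrix $D$ is a velocity discretization of a linear collision operator; $\langle\cdot,\cdot\rangle$ is the Euclidean inner product on $\mathbb{R}^{2N}$. *)

theory Defs
  imports "HOL-Analysis.Analysis"
begin

end

theory Submission
  imports Defs
begin

text \<open>
  For a symmetric matrix whose rows sum to zero, \<open>\<langle>DF, g\<rangle>\<close> equals minus one half of
  \<open>\<Sum>\<^sub>i\<^sub>j D\<^sub>i\<^sub>j (F\<^sub>j - F\<^sub>i)(g\<^sub>j - g\<^sub>i)\<close>.
  With \<open>g = ln F\<close> every term is nonnegative, since \<open>D\<^sub>i\<^sub>j \<ge> 0\<close> off the diagonal and \<open>ln\<close> is
  increasing. Hence \<open>\<langle>DF, ln F\<rangle> = 0\<close> forces \<open>F\<^sub>i = F\<^sub>j\<close> whenever \<open>D\<^sub>i\<^sub>j > 0\<close>, and the chain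
  \<open>k\<^sub>0, \<dots>, k\<^sub>n\<close> propagates this equality to all components: \<open>F\<close> is constant, i.e. lies in
  \<open>Ker D\<close>.
\<close>

definition dirichlet_form :: "real ^ 'n ^ 'n \<Rightarrow> real ^ 'n \<Rightarrow> real ^ 'n \<Rightarrow> real" where
  "dirichlet_form D f g = (\<Sum>i\<in>UNIV. \<Sum>j\<in>UNIV. D $ i $ j * ((f $ j - f $ i) * (g $ j - g $ i)))"

lemma diff_mult_ln_diff_nonneg:
  fixes a b :: real
  assumes "0 < a" "0 < b"
  shows "0 \<le> (a - b) * (ln a - ln b)"
proof (cases "a \<le> b")
  case True
  then show ?thesis using assms by (intro mult_nonpos_nonpos) auto
next
  case False
  then show ?thesis using assms by (intro mult_nonneg_nonneg) auto
qed

lemma in_span_const_vec_iff: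
  fixes x :: "real ^ 'n"
  shows "x \<in> span {\<chi> i. 1} \<longleftrightarrow> x = ((\<Sum>j\<in>UNIV. x $ j) / real CARD('n)) *\<^sub>R (\<chi> i. 1)"
proof
  assume "x \<in> span {\<chi> i. 1}"
  then obtain a where x: "x = a *\<^sub>R (\<chi> i. 1)" by (auto simp: span_singleton)
  then have "(\<Sum>j\<in>UNIV. x $ j) = a * real CARD('n)" by simp
  then show "x = ((\<Sum>j\<in>UNIV. x $ j) / real CARD('n)) *\<^sub>R (\<chi> i. 1)" using x by simp
next
  assume "x = ((\<Sum>j\<in>UNIV. x $ j) / real CARD('n)) *\<^sub>R (\<chi> i. 1)"
  then show "x \<in> span {\<chi> i. 1}" by (metis span_base span_mul singletonI)
qed

lemma inner_matrix_vector_mult_eq_dirichlet_form: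
  fixes D :: "real ^ 'n ^ 'n"
  assumes sym: "transpose D = D" and rows: "D *v (\<chi> i. 1) = 0"
  shows "(D *v f) \<bullet> g = - dirichlet_form D f g / 2"
proof -
  have row_sum: "(\<Sum>j\<in>UNIV. D $ i $ j) = 0" for i
    using arg_cong[OF rows, of "\<lambda>v. v $ i"] by (simp add: matrix_vector_mult_def)
  have D_sym: "D $ i $ j = D $ j $ i" for i j
    by (metis sym transpose_def vec_lambda_beta)
  define S where "S = (\<Sum>i\<in>UNIV. \<Sum>j\<in>UNIV. D $ i $ j * f $ j * g $ i)"
  have S_inner: "(D *v f) \<bullet> g = S"
    by (simp add: S_def inner_vec_def matrix_vector_mult_def sum_distrib_left mult_ac)
  have diag_terms: "(\<Sum>i\<in>UNIV. \<Sum>j\<in>UNIV. D $ i $ j * f $ i * g $ i) = 0"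
    by (simp add: row_sum mult.assoc flip: sum_distrib_right)
  have swap_sym: "(\<Sum>i\<in>UNIV. \<Sum>j\<in>UNIV. D $ i $ j * h i j)
      = (\<Sum>i\<in>UNIV. \<Sum>j\<in>UNIV. D $ i $ j * h j i)" for h :: "'n \<Rightarrow> 'n \<Rightarrow> real"
    by (subst sum.swap) (simp add: D_sym)
  have "dirichlet_form D f g
      = (\<Sum>i\<in>UNIV. \<Sum>j\<in>UNIV. D $ i $ j * (f $ j * g $ j))
      - (\<Sum>i\<in>UNIV. \<Sum>j\<in>UNIV. D $ i $ j * (f $ j * g $ i))
      - (\<Sum>i\<in>UNIV. \<Sum>j\<in>UNIV. D $ i $ j * (f $ i * g $ j))
      + (\<Sum>i\<in>UNIV. \<Sum>j\<in>UNIV. D $ i $ j * (f $ i * g $ i))"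
    by (simp add: dirichlet_form_def algebra_simps flip: sum_subtractf sum.distrib)
  also have "\<dots> = - 2 * S"
    using diag_terms swap_sym[of "\<lambda>i j. f $ j * g $ j"] swap_sym[of "\<lambda>i j. f $ i * g $ j"]
    by (simp add: S_def mult.assoc)
  finally show ?thesis using S_inner by simp
qed

lemma dirichlet_form_ln_eq_0_imp_eq:
  fixes D :: "real ^ 'n ^ 'n" and F :: "real ^ 'n"
  assumes offdiag: "\<forall>i j. i \<noteq> j \<longrightarrow> D $ i $ j \<ge> 0" and Fpos: "\<forall>i. F $ i > 0"
    and zero: "dirichlet_form D F (\<chi> i. ln (F $ i)) = 0" and edge: "D $ i $ j > 0"
  shows "F $ i = F $ j"
proof -
  define T where "T i j = D $ i $ j * ((F $ j - F $ i) * (ln (F $ j) - ln (F $ i)))" for i j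
  have T_nonneg: "0 \<le> T i j" for i j
    using offdiag Fpos diff_mult_ln_diff_nonneg[of "F $ j" "F $ i"]
    by (cases "i = j") (simp_all add: T_def)
  have "(\<Sum>i\<in>UNIV. \<Sum>j\<in>UNIV. T i j) = 0"
    using zero by (simp add: dirichlet_form_def T_def)
  then have "T i j = 0"
    using T_nonneg by (simp add: sum_nonneg sum_nonneg_eq_0_iff)
  then show ?thesis
    using edge Fpos by (simp add: T_def)
qed

lemma walk_const:
  assumes "\<forall>m<n. f (k m) = f (k (Suc m))" and "m \<le> n"
  shows "f (k m) = f (k 0)"
  using assms by (induction m) auto

theorem proposition2:
  fixes N :: nat and D :: "real ^ 'n ^ 'n" and F :: "real ^ 'n"
    and k :: "nat \<Rightarrow> 'n" and n :: nat
  assumes dim: "CARD('n) = 2 * N" and N_pos: "N \<ge> 1"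
    and sym: "transpose D = D"
    and nsd: "\<forall>x :: real ^ 'n. x \<bullet> (D *v x) \<le> 0"
    and ker: "{x :: real ^ 'n. D *v x = 0} = span {(\<chi> i. 1)}"
    and offdiag: "\<forall>i j. i \<noteq> j \<longrightarrow> D $ i $ j \<ge> 0"
    and cover: "\<forall>i. \<exists>m\<le>n. k m = i"
    and chain: "\<forall>m<n. k m \<noteq> k (Suc m) \<and> D $ k m $ k (Suc m) > 0"
    and Fpos: "\<forall>i. F $ i > 0"
  shows "(D *v F = 0 \<longleftrightarrow>
            F = ((\<Sum>j\<in>UNIV. F $ j) / real (2 * N)) *\<^sub>R (\<chi> i. 1))
       \<and> (F = ((\<Sum>j\<in>UNIV. F $ j) / real (2 * N)) *\<^sub>R (\<chi> i. 1) \<longleftrightarrow>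
            (D *v F) \<bullet> (\<chi> i. ln (F $ i)) = 0)"
proof -
  have in_ker: "D *v x = 0 \<longleftrightarrow> x \<in> span {\<chi> i. 1}" for x
    using ker by blast
  have ker_iff_const: "D *v F = 0 \<longleftrightarrow>
      F = ((\<Sum>j\<in>UNIV. F $ j) / real (2 * N)) *\<^sub>R (\<chi> i. 1)"
    using in_ker in_span_const_vec_iff dim by metis
  have entropy: "(D *v F) \<bullet> (\<chi> i. ln (F $ i)) = - dirichlet_form D F (\<chi> i. ln (F $ i)) / 2"
    using sym in_ker span_base by (blast intro: inner_matrix_vector_mult_eq_dirichlet_form)
  have "D *v F = 0" if entropy_zero: "(D *v F) \<bullet> (\<chi> i. ln (F $ i)) = 0"
  proof -
    have "F $ k m = F $ k (Suc m)" if "m < n" for m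
      using that chain offdiag Fpos entropy entropy_zero
      by (intro dirichlet_form_ln_eq_0_imp_eq[of D F]) auto
    then have "F $ i = F $ k 0" for i
      using cover walk_const[of n "(\<lambda>i. F $ i)" k] by metis
    then have "F = (F $ k 0) *\<^sub>R (\<chi> i. 1)"
      by (simp add: vec_eq_iff)
    then show "D *v F = 0"
      using in_ker by (metis span_base span_mul singletonI)
  qed
  then show ?thesis
    using ker_iff_const entropy by auto
qed

end
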